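(* Fix a permutation $P$ of $\{1,\dots,M\}$. Every point of $\mathcal{A}^*_{1;P}$ that is an extreme point of the convex hull of $\mathcal{A}^*_{1;P}$ is equal to $(R^P(\{q_k\}),D^P(\{q_k\}))$ for some test channels $q_k(z_k|x_k)$, $J+1\le k\le M$, whose output alphabets satisfy $|\mathcal Z_k|\le|\mathcal X_k|$ for all $J+1\le k\le M$.
   Context: Let $M\ge1$, $0\le J\le M$, $L\ge1$. Let $X_1,\dots,X_M,S,V$ be random variables on finite alphabets $\mathcal{X}_1,\dots,\mathcal{X}_M,\mathcal{S},\mathcal{V}$ with joint pmf $p(x_1,\dots,x_M,s,v)$. For $1\le l\le L$ let $\hat{\mathcal V}_l$ be a finite reconstruction alphabet and $d_l:\mathcal V\times\hat{\mathcal V}_l\to[0,d_{l,\max}]$ a bounded distortion measure. For $A\subseteq\{1,\dots,M\}$ write $Z_A=(Z_i)_{i\in A}$. Given finite alphabets $\mathcal Z_{J+1},\dots,\mathcal Z_M$ and test channels (conditional pmfs) $\{q_k(z_k|x_k)\}_{k=J+1}^M$, set $Z_m=X_m$ for $1\le m\le J$ and let $(X_1,\dots,X_M,S,V,Z_{J+1},\dots,Z_M)$ have joint pmf $p(x_1,\dots,x_M,s,v)\prod_{k=J+1}^M q_k(z_k|x_k)$. For a permutation $P$ of $\{1,\dots,M\}$ define $R^P(\{q_k\})\in\mathbb R^M$ by $R^P_{P(i)}=I(X_{P(i)};Z_{P(i)}\mid Z_{\{P(1),\dots,P(i-1)\}},S)$, $1\le i\le M$, and $D^P(\{q_k\})\in\mathbb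 R^L$ by $D^P_l=\min_{\psi_l}\mathbb E\,d_l(V,\psi_l(Z_1,\dots,Z_M,S))$, the minimum over all maps $\psi_l:\mathcal Z_1\times\dots\times\mathcal Z_M\times\mathcal S\to\hat{\mathcal V}_l$ (with $\mathcal Z_m=\mathcal X_m$ for $m\le J$). Let $\mathcal{A}^*_{1;P}(\{q_k\})=\{(R,D)\in\mathbb R^{M+L}: R_i\ge R^P_i(\{q_k\})\ \forall i,\ D_l\ge D^P_l(\{q_k\})\ \forall l\}$, and let $\mathcal A^*_{1;P}$ be the union of $\mathcal{A}^*_{1;P}(\{q_k\})$ over all finite alphabets $\mathcal Z_{J+1},\dots,\mathcal Z_M$ and all test channels $\{q_k\}$. *)

theory Defs
  imports "HOL-Analysis.Analysis" "HOL-Library.Function_Algebras" "HOL-Combinatorics.Permutations"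
begin

instantiation "fun" :: (type, real_vector) real_vector
begin
definition scaleR_fun :: "real \<Rightarrow> ('a \<Rightarrow> 'b) \<Rightarrow> 'a \<Rightarrow> 'b"
  where "scaleR_fun r f = (\<lambda>x. r *\<^sub>R f x)"
instance by standard (auto simp: scaleR_fun_def fun_eq_iff algebra_simps)
end

definition prb :: "'o set \<Rightarrow> ('o \<Rightarrow> real) \<Rightarrow> ('o \<Rightarrow> bool) \<Rightarrow> real" where
  "prb \<Omega> w E = (\<Sum>\<omega>\<in>{\<omega>\<in>\<Omega>. E \<omega>}. w \<omega>)"

definition cmi :: "'o set \<Rightarrow> ('o \<Rightarrow> real) \<Rightarrow> ('o \<Rightarrow> 'a) \<Rightarrow> ('o \<Rightarrow> 'b) \<Rightarrow> ('o \<Rightarrow> 'c) \<Rightarrow> real" where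
  "cmi \<Omega> w A B C =
     (\<Sum>t\<in>(\<lambda>\<omega>. (A \<omega>, B \<omega>, C \<omega>)) ` \<Omega>.
        (case t of (a, b, c) \<Rightarrow>
          (let pabc = prb \<Omega> w (\<lambda>\<omega>. A \<omega> = a \<and> B \<omega> = b \<and> C \<omega> = c);
               pac = prb \<Omega> w (\<lambda>\<omega>. A \<omega> = a \<and> C \<omega> = c);
               pbc = prb \<Omega> w (\<lambda>\<omega>. B \<omega> = b \<and> C \<omega> = c);
               pc = prb \<Omega> w (\<lambda>\<omega>. C \<omega> = c)
           in if pabc = 0 then 0 else pabc * log 2 (pabc * pc / (pac * pbc)))))"

definition expect :: "'o set \<Rightarrow> ('o \<Rightarrow> real) \<Rightarrow> ('o \<Rightarrow> real) \<Rightarrow> real" where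
  "expect \<Omega> w f = (\<Sum>\<omega>\<in>\<Omega>. w \<omega> * f \<omega>)"

text \<open>An outcome is (x, s, v, z): x the source tuple (on {1..M}), s the side information,
  v the remote source, z the test-channel outputs (on {J+1..M}).
  Alphabets of the Z_k (k > J) are finite subsets of nat (every finite alphabet is
  in bijection with one). Z_m for m \<le> J is X_m (tagged Inl), for m > J it is z m (tagged Inr).\<close>

type_synonym ('x, 's, 'v) outcome = "(nat \<Rightarrow> 'x) \<times> 's \<times> 'v \<times> (nat \<Rightarrow> nat)"

definition outcomes ::
  "nat \<Rightarrow> nat \<Rightarrow> (nat \<Rightarrow> 'x set) \<Rightarrow> 's set \<Rightarrow> 'v set \<Rightarrow> (nat \<Rightarrow> nat set)
    \<Rightarrow> ('x, 's, 'v) outcome set" where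
  "outcomes M J \<X> \<S> \<V> \<Z> = (PiE {1..M} \<X>) \<times> \<S> \<times> \<V> \<times> (PiE {J+1..M} \<Z>)"

definition weight ::
  "nat \<Rightarrow> nat \<Rightarrow> ((nat \<Rightarrow> 'x) \<Rightarrow> 's \<Rightarrow> 'v \<Rightarrow> real) \<Rightarrow> (nat \<Rightarrow> 'x \<Rightarrow> nat \<Rightarrow> real)
    \<Rightarrow> ('x, 's, 'v) outcome \<Rightarrow> real" where
  "weight M J p q \<omega> = (case \<omega> of (x, s, v, z) \<Rightarrow> p x s v * (\<Prod>k\<in>{J+1..M}. q k (x k) (z k)))"

definition Xrv :: "nat \<Rightarrow> ('x, 's, 'v) outcome \<Rightarrow> 'x" where
  "Xrv m \<omega> = fst \<omega> m"

definition Srv :: "('x, 's, 'v) outcome \<Rightarrow> 's" where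
  "Srv \<omega> = fst (snd \<omega>)"

definition Vrv :: "('x, 's, 'v) outcome \<Rightarrow> 'v" where
  "Vrv \<omega> = fst (snd (snd \<omega>))"

definition Zrv :: "nat \<Rightarrow> nat \<Rightarrow> ('x, 's, 'v) outcome \<Rightarrow> 'x + nat" where
  "Zrv J m \<omega> = (if m \<le> J then Inl (fst \<omega> m) else Inr (snd (snd (snd \<omega>)) m))"

definition Zset :: "nat \<Rightarrow> nat set \<Rightarrow> ('x, 's, 'v) outcome \<Rightarrow> nat \<Rightarrow> ('x + nat)" where
  "Zset J A \<omega> = restrict (\<lambda>m. Zrv J m \<omega>) A"

definition test_channels ::
  "nat \<Rightarrow> nat \<Rightarrow> (nat \<Rightarrow> 'x set) \<Rightarrow> (nat \<Rightarrow> nat set) \<Rightarrow> (nat \<Rightarrow> 'x \<Rightarrow> nat \<Rightarrow> real) \<Rightarrow> bool" where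
  "test_channels M J \<X> \<Z> q \<longleftrightarrow>
     (\<forall>k\<in>{J+1..M}. finite (\<Z> k) \<and>
        (\<forall>x\<in>\<X> k. (\<forall>z\<in>\<Z> k. 0 \<le> q k x z) \<and> (\<Sum>z\<in>\<Z> k. q k x z) = 1))"

definition RP ::
  "nat \<Rightarrow> nat \<Rightarrow> (nat \<Rightarrow> 'x set) \<Rightarrow> 's set \<Rightarrow> 'v set \<Rightarrow> ((nat \<Rightarrow> 'x) \<Rightarrow> 's \<Rightarrow> 'v \<Rightarrow> real)
    \<Rightarrow> (nat \<Rightarrow> nat) \<Rightarrow> (nat \<Rightarrow> nat set) \<Rightarrow> (nat \<Rightarrow> 'x \<Rightarrow> nat \<Rightarrow> real) \<Rightarrow> nat \<Rightarrow> real" where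
  "RP M J \<X> \<S> \<V> p P \<Z> q m =
     (if m \<in> {1..M} then
        (let i = inv_into {1..M} P m in
         cmi (outcomes M J \<X> \<S> \<V> \<Z>) (weight M J p q)
             (Xrv m) (Zrv J m) (\<lambda>\<omega>. (Zset J (P ` {1..<i}) \<omega>, Srv \<omega>)))
      else 0)"

definition DP ::
  "nat \<Rightarrow> nat \<Rightarrow> nat \<Rightarrow> (nat \<Rightarrow> 'x set) \<Rightarrow> 's set \<Rightarrow> 'v set \<Rightarrow> ((nat \<Rightarrow> 'x) \<Rightarrow> 's \<Rightarrow> 'v \<Rightarrow> real)
    \<Rightarrow> (nat \<Rightarrow> 'r set) \<Rightarrow> (nat \<Rightarrow> 'v \<Rightarrow> 'r \<Rightarrow> real)
    \<Rightarrow> (nat \<Rightarrow> nat set) \<Rightarrow> (nat \<Rightarrow> 'x \<Rightarrow> nat \<Rightarrow> real) \<Rightarrow> nat \<Rightarrow> real" where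
  "DP M J L \<X> \<S> \<V> p Vh d \<Z> q l =
     (if l \<in> {1..L} then
        Min {expect (outcomes M J \<X> \<S> \<V> \<Z>) (weight M J p q)
               (\<lambda>\<omega>. d l (Vrv \<omega>) (\<psi> (Zset J {1..M} \<omega>, Srv \<omega>))) |
             \<psi> :: ((nat \<Rightarrow> 'x + nat) \<times> 's \<Rightarrow> 'r). \<forall>a. \<psi> a \<in> Vh l}
      else 0)"

text \<open>The region A*_{1;P}(q): points (R, D) with R \<in> R^M, D \<in> R^L, embedded as
  functions nat \<Rightarrow> real vanishing outside {1..M} resp. {1..L}.\<close>
definition regionq ::
  "nat \<Rightarrow> nat \<Rightarrow> nat \<Rightarrow> (nat \<Rightarrow> 'x set) \<Rightarrow> 's set \<Rightarrow> 'v set \<Rightarrow> ((nat \<Rightarrow> 'x) \<Rightarrow> 's \<Rightarrow> 'v \<Rightarrow> real)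
    \<Rightarrow> (nat \<Rightarrow> 'r set) \<Rightarrow> (nat \<Rightarrow> 'v \<Rightarrow> 'r \<Rightarrow> real) \<Rightarrow> (nat \<Rightarrow> nat)
    \<Rightarrow> (nat \<Rightarrow> nat set) \<Rightarrow> (nat \<Rightarrow> 'x \<Rightarrow> nat \<Rightarrow> real) \<Rightarrow> ((nat \<Rightarrow> real) \<times> (nat \<Rightarrow> real)) set" where
  "regionq M J L \<X> \<S> \<V> p Vh d P \<Z> q =
     {(R, D). (\<forall>i. i \<notin> {1..M} \<longrightarrow> R i = 0) \<and> (\<forall>l. l \<notin> {1..L} \<longrightarrow> D l = 0) \<and>
              (\<forall>i\<in>{1..M}. R i \<ge> RP M J \<X> \<S> \<V> p P \<Z> q i) \<and>
              (\<forall>l\<in>{1..L}. D l \<ge> DP M J L \<X> \<S> \<V> p Vh d \<Z> q l)}"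

definition region ::
  "nat \<Rightarrow> nat \<Rightarrow> nat \<Rightarrow> (nat \<Rightarrow> 'x set) \<Rightarrow> 's set \<Rightarrow> 'v set \<Rightarrow> ((nat \<Rightarrow> 'x) \<Rightarrow> 's \<Rightarrow> 'v \<Rightarrow> real)
    \<Rightarrow> (nat \<Rightarrow> 'r set) \<Rightarrow> (nat \<Rightarrow> 'v \<Rightarrow> 'r \<Rightarrow> real) \<Rightarrow> (nat \<Rightarrow> nat)
    \<Rightarrow> ((nat \<Rightarrow> real) \<times> (nat \<Rightarrow> real)) set" where
  "region M J L \<X> \<S> \<V> p Vh d P =
     (\<Union>{regionq M J L \<X> \<S> \<V> p Vh d P \<Z> q | \<Z> q. test_channels M J \<X> \<Z> q})"

end

theory Submission
  imports Defs
begin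

(* Let pt be an extreme point of conv A*_{1;P} lying in A*_{1;P}. Being extreme, pt is
   itself a corner point (R^P(q), D^P(q)) for some test channels q. If some alphabet Z_k
   (k > J) is larger than X_k, the |Z_k| columns z |-> q_k(z|.) are linearly dependent, so
   there is a nonzero c on Z_k with sum_z q_k(z|x) c(z) = 0 for every x. Tilting the channel
   to q_k(z|x)(1 + t c(z)) keeps it a channel for small |t|; every conditional mutual
   information R^P_i is affine in t and every distortion D^P_l is concave in t (a minimum of
   affine functions). Hence the corner point at q is the midpoint of the corner points at t
   and -t up to a nonnegative distortion slack, and extremality forces the corner point at t
   to equal pt. Choosing |t| maximal kills one letter of Z_k, and induction on the total
   alphabet size finishes the proof. *)

section \<open>Linear algebra\<close>

lemma nontrivial_kernel_vector:
  fixes f :: "'x \<Rightarrow> 'z \<Rightarrow> real"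
  assumes "finite X" "finite Z" "card Z > card X"
  shows "\<exists>c. (\<exists>z\<in>Z. c z \<noteq> 0) \<and> (\<forall>x\<in>X. (\<Sum>z\<in>Z. c z * f x z) = 0)"
  using assms
proof (induction X arbitrary: Z f rule: finite_induct)
  case empty
  then obtain z where "z \<in> Z" by fastforce
  then show ?case by (intro exI[of _ "\<lambda>_. 1"]) auto
next
  case (insert x0 X)
  show ?case
  proof (cases "\<forall>z\<in>Z. f x0 z = 0")
    case True
    from insert.IH[of Z f] insert.prems insert.hyps obtain c where
      "\<exists>z\<in>Z. c z \<noteq> 0" "\<forall>x\<in>X. (\<Sum>z\<in>Z. c z * f x z) = 0" by auto
    then show ?thesis using True by (intro exI[of _ c]) auto
  next
    case False
    text \<open>Gaussian elimination: use column z0 to clear row x0, recurse on the other columns.\<close>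
    then obtain z0 where z0: "z0 \<in> Z" "f x0 z0 \<noteq> 0" by auto
    define Z' where "Z' = Z - {z0}"
    define g where "g x z = f x z - f x z0 * f x0 z / f x0 z0" for x z
    have "card Z' > card X" using insert.prems insert.hyps z0 by (simp add: Z'_def)
    with insert.IH[of Z' g] insert.prems obtain c' where
      c': "\<exists>z\<in>Z'. c' z \<noteq> 0" "\<forall>x\<in>X. (\<Sum>z\<in>Z'. c' z * g x z) = 0" by (auto simp: Z'_def)
    define c where "c = c'(z0 := - (\<Sum>z\<in>Z'. c' z * f x0 z) / f x0 z0)"
    have sum_split: "(\<Sum>z\<in>Z. c z * f x z) = c z0 * f x z0 + (\<Sum>z\<in>Z'. c' z * f x z)" for x
    proof -
      have "(\<Sum>z\<in>Z. c z * f x z) = c z0 * f x z0 + (\<Sum>z\<in>Z'. c z * f x z)"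
        unfolding Z'_def using z0 insert.prems by (simp add: sum.remove)
      also have "(\<Sum>z\<in>Z'. c z * f x z) = (\<Sum>z\<in>Z'. c' z * f x z)"
        by (rule sum.cong) (auto simp: c_def Z'_def)
      finally show ?thesis .
    qed
    have "(\<Sum>z\<in>Z. c z * f x z) = 0" if "x \<in> insert x0 X" for x
    proof (cases "x = x0")
      case True
      then show ?thesis unfolding sum_split using z0 by (simp add: c_def)
    next
      case False
      with that have x: "x \<in> X" by auto
      have "0 = (\<Sum>z\<in>Z'. c' z * g x z)" using c' x by auto
      also have "\<dots> = (\<Sum>z\<in>Z'. c' z * f x z) - f x z0 / f x0 z0 * (\<Sum>z\<in>Z'. c' z * f x0 z)"
        by (simp add: g_def algebra_simps sum_subtractf sum_distrib_left)
      also have "\<dots> = c z0 * f x z0 + (\<Sum>z\<in>Z'. c' z * f x z)"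
        using z0 by (simp add: c_def field_simps)
      also have "\<dots> = (\<Sum>z\<in>Z. c z * f x z)" by (rule sum_split[symmetric])
      finally show ?thesis by simp
    qed
    moreover have "\<exists>z\<in>Z. c z \<noteq> 0" using c' by (auto simp: c_def Z'_def)
    ultimately show ?thesis by blast
  qed
qed

section \<open>Conditional mutual information as a sum of local terms\<close>

definition cmi_term :: "'o set \<Rightarrow> ('o \<Rightarrow> real) \<Rightarrow> ('o \<Rightarrow> 'a) \<Rightarrow> ('o \<Rightarrow> 'b) \<Rightarrow> ('o \<Rightarrow> 'c)
    \<Rightarrow> 'a \<times> 'b \<times> 'c \<Rightarrow> real" where
  "cmi_term \<Omega> w A B C t = (case t of (a, b, c) \<Rightarrow>
          (let pabc = prb \<Omega> w (\<lambda>\<omega>. A \<omega> = a \<and> B \<omega> = b \<and> C \<omega> = c);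
               pac = prb \<Omega> w (\<lambda>\<omega>. A \<omega> = a \<and> C \<omega> = c);
               pbc = prb \<Omega> w (\<lambda>\<omega>. B \<omega> = b \<and> C \<omega> = c);
               pc = prb \<Omega> w (\<lambda>\<omega>. C \<omega> = c)
           in if pabc = 0 then 0 else pabc * log 2 (pabc * pc / (pac * pbc))))"

lemma cmi_as_sum: "cmi \<Omega> w A B C = (\<Sum>t\<in>(\<lambda>\<omega>. (A \<omega>, B \<omega>, C \<omega>)) ` \<Omega>. cmi_term \<Omega> w A B C t)"
  unfolding cmi_def cmi_term_def ..

text \<open>If, for a triple t, changing the weight multiplies the probabilities of the events
  {A,B,C} and {B,C} by one factor alpha t and those of {A,C} and {C} by another factor beta t,
  then the local term of t is multiplied by alpha t: the ratio inside the logarithm is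
  unchanged.\<close>
lemma cmi_rescale:
  fixes \<Omega> :: "'o set" and A :: "'o \<Rightarrow> 'a" and B :: "'o \<Rightarrow> 'b" and C :: "'o \<Rightarrow> 'c"
    and \<alpha> \<beta> :: "'a \<times> 'b \<times> 'c \<Rightarrow> real"
  defines "T \<equiv> (\<lambda>\<omega>. (A \<omega>, B \<omega>, C \<omega>)) ` \<Omega>"
  assumes abc: "\<And>a b c. (a, b, c) \<in> T \<Longrightarrow>
      prb \<Omega> w' (\<lambda>\<omega>. A \<omega> = a \<and> B \<omega> = b \<and> C \<omega> = c) = \<alpha> (a,b,c) * prb \<Omega> w (\<lambda>\<omega>. A \<omega> = a \<and> B \<omega> = b \<and> C \<omega> = c)"
    and bc: "\<And>a b c. (a, b, c) \<in> T \<Longrightarrow>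
      prb \<Omega> w' (\<lambda>\<omega>. B \<omega> = b \<and> C \<omega> = c) = \<alpha> (a,b,c) * prb \<Omega> w (\<lambda>\<omega>. B \<omega> = b \<and> C \<omega> = c)"
    and ac: "\<And>a b c. (a, b, c) \<in> T \<Longrightarrow>
      prb \<Omega> w' (\<lambda>\<omega>. A \<omega> = a \<and> C \<omega> = c) = \<beta> (a,b,c) * prb \<Omega> w (\<lambda>\<omega>. A \<omega> = a \<and> C \<omega> = c)"
    and c: "\<And>a b c. (a, b, c) \<in> T \<Longrightarrow>
      prb \<Omega> w' (\<lambda>\<omega>. C \<omega> = c) = \<beta> (a,b,c) * prb \<Omega> w (\<lambda>\<omega>. C \<omega> = c)"
    and nondegenerate: "\<And>t. t \<in> T \<Longrightarrow> \<alpha> t \<noteq> 0 \<Longrightarrow> \<beta> t \<noteq> 0"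
  shows "cmi \<Omega> w' A B C = (\<Sum>t\<in>T. \<alpha> t * cmi_term \<Omega> w A B C t)"
  unfolding cmi_as_sum T_def[symmetric]
proof (rule sum.cong[OF refl])
  fix t assume t: "t \<in> T"
  obtain a b c where t_eq: "t = (a, b, c)" by (cases t) auto
  define x1 where "x1 = prb \<Omega> w (\<lambda>\<omega>. A \<omega> = a \<and> B \<omega> = b \<and> C \<omega> = c)"
  define x2 where "x2 = prb \<Omega> w (\<lambda>\<omega>. A \<omega> = a \<and> C \<omega> = c)"
  define x3 where "x3 = prb \<Omega> w (\<lambda>\<omega>. B \<omega> = b \<and> C \<omega> = c)"
  define x4 where "x4 = prb \<Omega> w (\<lambda>\<omega>. C \<omega> = c)"
  have new: "cmi_term \<Omega> w' A B C t = (if \<alpha> t * x1 = 0 then 0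
      else \<alpha> t * x1 * log 2 (\<alpha> t * x1 * (\<beta> t * x4) / (\<beta> t * x2 * (\<alpha> t * x3))))"
    using t unfolding cmi_term_def t_eq Let_def
    by (simp add: abc bc ac c x1_def x2_def x3_def x4_def)
  have old: "cmi_term \<Omega> w A B C t = (if x1 = 0 then 0 else x1 * log 2 (x1 * x4 / (x2 * x3)))"
    unfolding cmi_term_def t_eq Let_def x1_def x2_def x3_def x4_def by simp
  show "cmi_term \<Omega> w' A B C t = \<alpha> t * cmi_term \<Omega> w A B C t"
  proof (cases "\<alpha> t = 0")
    case True then show ?thesis by (simp add: new)
  next
    case False
    with nondegenerate t have "\<beta> t \<noteq> 0" by blast
    with False have "\<alpha> t * x1 * (\<beta> t * x4) / (\<beta> t * x2 * (\<alpha> t * x3)) = x1 * x4 / (x2 * x3)"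
      by (simp add: field_simps)
    then show ?thesis using False by (simp add: new old)
  qed
qed

lemma prb_restrict_support:
  assumes "\<Omega>' \<subseteq> \<Omega>" "finite \<Omega>" "\<forall>\<omega>\<in>\<Omega> - \<Omega>'. w \<omega> = 0"
  shows "prb \<Omega> w E = prb \<Omega>' w E"
  unfolding prb_def by (rule sum.mono_neutral_right) (use assms in auto)

lemma expect_restrict_support:
  assumes "\<Omega>' \<subseteq> \<Omega>" "finite \<Omega>" "\<forall>\<omega>\<in>\<Omega> - \<Omega>'. w \<omega> = 0"
  shows "expect \<Omega> w f = expect \<Omega>' w f"
  unfolding expect_def by (rule sum.mono_neutral_right) (use assms in auto)

lemma cmi_restrict_support:
  assumes sub: "\<Omega>' \<subseteq> \<Omega>" and fin: "finite \<Omega>" and null: "\<forall>\<omega>\<in>\<Omega> - \<Omega>'. w \<omega> = 0"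
  shows "cmi \<Omega> w A B C = cmi \<Omega>' w A B C"
proof -
  let ?T = "\<lambda>\<Omega>. (\<lambda>\<omega>. (A \<omega>, B \<omega>, C \<omega>)) ` \<Omega>"
  have "cmi \<Omega> w A B C = (\<Sum>t\<in>?T \<Omega>. cmi_term \<Omega>' w A B C t)"
    unfolding cmi_as_sum cmi_term_def using prb_restrict_support[OF assms] by simp
  also have "\<dots> = (\<Sum>t\<in>?T \<Omega>'. cmi_term \<Omega>' w A B C t)"
  proof (rule sum.mono_neutral_right)
    show "\<forall>t\<in>?T \<Omega> - ?T \<Omega>'. cmi_term \<Omega>' w A B C t = 0"
    proof
      fix t assume t: "t \<in> ?T \<Omega> - ?T \<Omega>'"
      obtain a b c where t_eq: "t = (a, b, c)" by (cases t) auto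
      have "{\<omega> \<in> \<Omega>'. A \<omega> = a \<and> B \<omega> = b \<and> C \<omega> = c} = {}" using t t_eq by (auto simp: image_iff)
      then have "prb \<Omega>' w (\<lambda>\<omega>. A \<omega> = a \<and> B \<omega> = b \<and> C \<omega> = c) = 0" unfolding prb_def by (metis sum.empty)
      then show "cmi_term \<Omega>' w A B C t = 0" unfolding cmi_term_def t_eq by simp
    qed
  qed (use sub fin in auto)
  finally show ?thesis unfolding cmi_as_sum .
qed

section \<open>Tilting one test channel\<close>

definition zval :: "nat \<Rightarrow> ('x, 's, 'v) outcome \<Rightarrow> nat" where
  "zval k \<omega> = snd (snd (snd \<omega>)) k"

definition tilt :: "nat \<Rightarrow> (nat \<Rightarrow> real) \<Rightarrow> real \<Rightarrow> (nat \<Rightarrow> 'x \<Rightarrow> nat \<Rightarrow> real)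
    \<Rightarrow> nat \<Rightarrow> 'x \<Rightarrow> nat \<Rightarrow> real" where
  "tilt k c t q = q(k := \<lambda>x z. q k x z * (1 + t * c z))"

lemma tilt_zero [simp]: "tilt k c 0 q = q"
  unfolding tilt_def by auto

lemma weight_tilt:
  assumes k: "k \<in> {J+1..M}"
  shows "weight M J p (tilt k c t q) \<omega> = weight M J p q \<omega> * (1 + t * c (zval k \<omega>))"
proof -
  obtain x s v z where \<omega>: "\<omega> = (x, s, v, z)" by (cases \<omega>) auto
  have "(\<Prod>j\<in>{J+1..M}. tilt k c t q j (x j) (z j))
      = q k (x k) (z k) * (1 + t * c (z k)) * (\<Prod>j\<in>{J+1..M} - {k}. q j (x j) (z j))"
    using k by (simp add: tilt_def prod.remove)
  also have "\<dots> = (\<Prod>j\<in>{J+1..M}. q j (x j) (z j)) * (1 + t * c (z k))"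
    using k by (simp add: prod.remove)
  finally show ?thesis unfolding \<omega> weight_def zval_def by simp
qed

lemma test_channels_tilt:
  assumes tc: "test_channels M J \<X> \<Z> q" and k: "k \<in> {J+1..M}"
    and balanced: "\<forall>x\<in>\<X> k. (\<Sum>z\<in>\<Z> k. q k x z * c z) = 0"
    and nonneg: "\<forall>z\<in>\<Z> k. 0 \<le> 1 + t * c z"
  shows "test_channels M J \<X> \<Z> (tilt k c t q)"
  unfolding test_channels_def
proof (intro ballI conjI)
  fix j assume "j \<in> {J+1..M}"
  then show "finite (\<Z> j)" using tc unfolding test_channels_def by auto
next
  fix j x z assume "j \<in> {J+1..M}" "x \<in> \<X> j" "z \<in> \<Z> j"
  then show "0 \<le> tilt k c t q j x z"
    using tc nonneg unfolding test_channels_def tilt_def by auto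
next
  fix j x assume j: "j \<in> {J+1..M}" and x: "x \<in> \<X> j"
  show "(\<Sum>z\<in>\<Z> j. tilt k c t q j x z) = 1"
  proof (cases "j = k")
    case True
    have "(\<Sum>z\<in>\<Z> k. tilt k c t q k x z) = (\<Sum>z\<in>\<Z> k. q k x z) + t * (\<Sum>z\<in>\<Z> k. q k x z * c z)"
      by (simp add: tilt_def algebra_simps sum.distrib sum_distrib_left)
    then show ?thesis using tc j x balanced True unfolding test_channels_def by auto
  next
    case False
    then show ?thesis using tc j x unfolding test_channels_def tilt_def by simp
  qed
qed

lemma prb_tilt:
  assumes k: "k \<in> {J+1..M}"
  shows "prb \<Omega> (weight M J p (tilt k c t q)) E
     = prb \<Omega> (weight M J p q) E + t * prb \<Omega> (\<lambda>\<omega>. weight M J p q \<omega> * c (zval k \<omega>)) E"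
  unfolding prb_def weight_tilt[OF k] by (simp add: algebra_simps sum.distrib sum_distrib_left)

lemma prb_tilt_forced:
  assumes k: "k \<in> {J+1..M}" and forced: "\<And>\<omega>. E \<omega> \<Longrightarrow> zval k \<omega> = y"
  shows "prb \<Omega> (weight M J p (tilt k c t q)) E = (1 + t * c y) * prb \<Omega> (weight M J p q) E"
  unfolding prb_def weight_tilt[OF k] sum_distrib_left
  by (rule sum.cong) (auto simp: forced mult.commute)

lemma sum_PiE_factor_vanishes:
  fixes F :: "('i \<Rightarrow> 'a) \<Rightarrow> real" and Q :: "'i \<Rightarrow> 'a \<Rightarrow> real" and c :: "'a \<Rightarrow> real"
  assumes k: "k \<in> D" and fin: "finite D" and indep: "\<And>z y. F (z(k := y)) = F z"
    and zero: "(\<Sum>y\<in>Z k. Q k y * c y) = 0"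
  shows "(\<Sum>z\<in>PiE D Z. F z * (\<Prod>j\<in>D. Q j (z j)) * c (z k)) = 0"
proof -
  define D' where "D' = D - {k}"
  have D: "D = insert k D'" "k \<notin> D'" "finite D'" using k fin by (auto simp: D'_def)
  have prod_upd: "(\<Prod>j\<in>D. Q j ((g(k:=y)) j)) = Q k y * (\<Prod>j\<in>D'. Q j (g j))" for g y
  proof -
    have "(\<Prod>j\<in>D'. Q j ((g(k:=y)) j)) = (\<Prod>j\<in>D'. Q j (g j))"
      by (rule prod.cong) (use D(2) in auto)
    then show ?thesis unfolding D(1) using D(2,3) by simp
  qed
  have "(\<Sum>z\<in>PiE D Z. F z * (\<Prod>j\<in>D. Q j (z j)) * c (z k))
      = (\<Sum>(y,g)\<in>Z k \<times> PiE D' Z. F (g(k:=y)) * (\<Prod>j\<in>D. Q j ((g(k:=y)) j)) * c y)"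
    unfolding D(1) PiE_insert_eq
    by (subst sum.reindex[OF inj_combinator[OF D(2)]]) (simp add: case_prod_beta)
  also have "\<dots> = (\<Sum>g\<in>PiE D' Z. \<Sum>y\<in>Z k. F (g(k:=y)) * (\<Prod>j\<in>D. Q j ((g(k:=y)) j)) * c y)"
    by (subst sum.cartesian_product[symmetric]) (subst sum.swap, simp)
  also have "\<dots> = (\<Sum>g\<in>PiE D' Z. F g * (\<Prod>j\<in>D'. Q j (g j)) * (\<Sum>y\<in>Z k. Q k y * c y))"
    by (simp only: prod_upd indep) (simp add: sum_distrib_left mult_ac)
  also have "\<dots> = 0" using zero by simp
  finally show ?thesis .
qed

lemma sum_outcomes:
  "(\<Sum>\<omega>\<in>outcomes M J \<X> \<S> \<V> \<Z>. f \<omega>) =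
   (\<Sum>x\<in>PiE {1..M} \<X>. \<Sum>s\<in>\<S>. \<Sum>v\<in>\<V>. \<Sum>z\<in>PiE {J+1..M} \<Z>. f (x, s, v, z))"
  unfolding outcomes_def by (simp add: sum.cartesian_product)

text \<open>An event that does not look at Z_k keeps its probability under a tilt orthogonal to
  the channel rows: the tilt only redistributes mass among the values of Z_k.\<close>
lemma prb_tilt_invariant:
  assumes k: "k \<in> {J+1..M}" and fin: "finite (outcomes M J \<X> \<S> \<V> \<Z>)"
    and balanced: "\<forall>x\<in>\<X> k. (\<Sum>z\<in>\<Z> k. q k x z * c z) = 0"
    and blind: "\<And>x s v z y. E (x, s, v, z(k := y)) = E (x, s, v, z)"
  shows "prb (outcomes M J \<X> \<S> \<V> \<Z>) (weight M J p (tilt k c t q)) E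
       = prb (outcomes M J \<X> \<S> \<V> \<Z>) (weight M J p q) E"
proof -
  let ?\<Omega> = "outcomes M J \<X> \<S> \<V> \<Z>"
  have shift: "prb ?\<Omega> (\<lambda>\<omega>. weight M J p q \<omega> * c (zval k \<omega>)) E = 0"
  proof -
    have inner: "(\<Sum>z\<in>PiE {J+1..M} \<Z>. (if E (x,s,v,z) then p x s v else 0)
                   * (\<Prod>j\<in>{J+1..M}. q j (x j) (z j)) * c (z k)) = 0"
      if x: "x \<in> PiE {1..M} \<X>" for x s v
    proof (rule sum_PiE_factor_vanishes[OF k])
      show "(\<Sum>y\<in>\<Z> k. q k (x k) y * c y) = 0" using balanced x k by auto
    qed (use blind in auto)
    have "prb ?\<Omega> (\<lambda>\<omega>. weight M J p q \<omega> * c (zval k \<omega>)) E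
       = (\<Sum>x\<in>PiE {1..M} \<X>. \<Sum>s\<in>\<S>. \<Sum>v\<in>\<V>. \<Sum>z\<in>PiE {J+1..M} \<Z>.
           (if E (x,s,v,z) then p x s v else 0) * (\<Prod>j\<in>{J+1..M}. q j (x j) (z j)) * c (z k))"
      unfolding prb_def sum.inter_filter[OF fin] sum_outcomes weight_def zval_def
      by (intro sum.cong refl) simp
    also have "\<dots> = 0" by (rule sum.neutral) (use inner in simp)
    finally show ?thesis .
  qed
  show ?thesis unfolding prb_tilt[OF k] shift by simp
qed

lemma Zrv_upd: "j \<noteq> k \<Longrightarrow> Zrv J j (x, s, v, z(k := y)) = Zrv J j (x, s, v, z)"
  by (simp add: Zrv_def)

lemma Zset_upd: "k \<notin> G \<Longrightarrow> Zset J G (x, s, v, z(k := y)) = Zset J G (x, s, v, z)"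
  unfolding Zset_def by (rule restrict_ext) (auto simp: Zrv_def)

text \<open>If k \<in> G the tilt rescales all four
  probabilities of the term by 1 + t c(z_k); if k = m it rescales only those mentioning Z_m;
  otherwise it changes nothing.\<close>
lemma cmi_tilt_rescaled:
  fixes G :: "nat set" and \<X> :: "nat \<Rightarrow> 'x set" and \<S> :: "'s set" and \<V> :: "'v set"
    and \<Z> :: "nat \<Rightarrow> nat set" and M J m k :: nat and p :: "(nat \<Rightarrow> 'x) \<Rightarrow> 's \<Rightarrow> 'v \<Rightarrow> real"
    and q :: "nat \<Rightarrow> 'x \<Rightarrow> nat \<Rightarrow> real" and c :: "nat \<Rightarrow> real"
  defines "\<Omega> \<equiv> outcomes M J \<X> \<S> \<V> \<Z>"
  defines "I \<equiv> \<lambda>r. cmi \<Omega> (weight M J p r) (Xrv m) (Zrv J m) (\<lambda>\<omega>. (Zset J G \<omega>, Srv \<omega>))"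
  assumes k: "k \<in> {J+1..M}" and fin: "finite \<Omega>"
    and balanced: "\<forall>x\<in>\<X> k. (\<Sum>z\<in>\<Z> k. q k x z * c z) = 0"
  shows "\<exists>\<gamma>. \<forall>t. I (tilt k c t q) = (\<Sum>u\<in>(\<lambda>\<omega>. (Xrv m \<omega>, Zrv J m \<omega>, Zset J G \<omega>, Srv \<omega>)) ` \<Omega>.
           (1 + t * \<gamma> u) * cmi_term \<Omega> (weight M J p q) (Xrv m) (Zrv J m) (\<lambda>\<omega>. (Zset J G \<omega>, Srv \<omega>)) u)"
    (is "\<exists>\<gamma>. \<forall>t. I (tilt k c t q) = ?rhs \<gamma> t")
proof -
  let ?C = "\<lambda>\<omega>. (Zset J G \<omega>, Srv \<omega>)"
  let ?w = "\<lambda>t. weight M J p (tilt k c t q)"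
  have kJ: "\<not> k \<le> J" using k by auto
  text \<open>Events blind to Z_k keep their probability (factor 1, in the shape cmi_rescale expects).\<close>
  have same: "prb \<Omega> (?w t) E = 1 * prb \<Omega> (weight M J p q) E"
    if blind: "\<And>x s v z y. E (x, s, v, z(k := y)) = E (x, s, v, z)" for E t
    unfolding \<Omega>_def mult_1 by (rule prb_tilt_invariant[where q=q and c=c, OF k fin[unfolded \<Omega>_def] balanced]) (rule blind)
  consider (cond) "k \<in> G" | (own) "k \<notin> G" "k = m" | (other) "k \<notin> G" "k \<noteq> m" by blast
  then show ?thesis
  proof cases
    case cond
    define \<gamma> where "\<gamma> = (\<lambda>(a :: 'x, b :: 'x + nat, cc :: (nat \<Rightarrow> 'x + nat) \<times> 's). c (projr (fst cc k)))"
    have forced: "zval k \<omega> = projr (fst cc k)" if "?C \<omega> = cc" for \<omega> cc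
      using that cond kJ by (auto simp: Zset_def Zrv_def zval_def)
    have "I (tilt k c t q) = ?rhs \<gamma> t" for t
      unfolding I_def
      by (rule cmi_rescale[where \<beta>="\<lambda>u. 1 + t * \<gamma> u"])
         (simp_all only: \<gamma>_def prod.case not_False_eq_True, (rule prb_tilt_forced[OF k], blast intro: forced)+)
    then show ?thesis by blast
  next
    case own
    define \<gamma> where "\<gamma> = (\<lambda>(a :: 'x, b :: 'x + nat, cc :: (nat \<Rightarrow> 'x + nat) \<times> 's). c (projr b))"
    have forced: "zval k \<omega> = projr b" if "Zrv J m \<omega> = b" for \<omega> b
      using that own kJ by (auto simp: Zrv_def zval_def)
    have "I (tilt k c t q) = ?rhs \<gamma> t" for t
      unfolding I_def
    proof (rule cmi_rescale[where \<beta>="\<lambda>_. 1"])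
      text \<open>Events mentioning Z_m = Z_k are rescaled, the others are blind to Z_k.\<close>
      show "prb \<Omega> (?w t) (\<lambda>\<omega>. Xrv m \<omega> = a \<and> Zrv J m \<omega> = b \<and> ?C \<omega> = cc)
          = (1 + t * \<gamma> (a, b, cc)) * prb \<Omega> (weight M J p q) (\<lambda>\<omega>. Xrv m \<omega> = a \<and> Zrv J m \<omega> = b \<and> ?C \<omega> = cc)"
        "prb \<Omega> (?w t) (\<lambda>\<omega>. Zrv J m \<omega> = b \<and> ?C \<omega> = cc)
          = (1 + t * \<gamma> (a, b, cc)) * prb \<Omega> (weight M J p q) (\<lambda>\<omega>. Zrv J m \<omega> = b \<and> ?C \<omega> = cc)"
        for a b cc
        unfolding \<gamma>_def prod.case by (rule prb_tilt_forced[OF k]; blast intro: forced)+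
      show "prb \<Omega> (?w t) (\<lambda>\<omega>. Xrv m \<omega> = a \<and> ?C \<omega> = cc) = 1 * prb \<Omega> (weight M J p q) (\<lambda>\<omega>. Xrv m \<omega> = a \<and> ?C \<omega> = cc)"
        "prb \<Omega> (?w t) (\<lambda>\<omega>. ?C \<omega> = cc) = 1 * prb \<Omega> (weight M J p q) (\<lambda>\<omega>. ?C \<omega> = cc)"
        for a cc
        using own by (rule_tac same; simp add: Zset_upd Xrv_def Srv_def)+
    qed simp
    then show ?thesis by blast
  next
    case other
    have "I (tilt k c t q) = ?rhs (\<lambda>_. 0) t" for t
      unfolding I_def mult_zero_right add_0_right
      by (rule cmi_rescale[where \<beta>="\<lambda>_. 1"],
          (rule same; simp add: Zset_upd Zrv_upd other not_sym[OF other(2)] Xrv_def Srv_def)+) simp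
    then show ?thesis by (intro exI[of _ "\<lambda>_. 0"]) simp
  qed
qed
lemma cmi_tilt_affine:
  assumes k: "k \<in> {J+1..M}" and fin: "finite (outcomes M J \<X> \<S> \<V> \<Z>)"
    and balanced: "\<forall>x\<in>\<X> k. (\<Sum>z\<in>\<Z> k. q k x z * c z) = 0"
  shows "\<exists>g. \<forall>t. cmi (outcomes M J \<X> \<S> \<V> \<Z>) (weight M J p (tilt k c t q)) (Xrv m) (Zrv J m)
                   (\<lambda>\<omega>. (Zset J G \<omega>, Srv \<omega>))
                 = cmi (outcomes M J \<X> \<S> \<V> \<Z>) (weight M J p q) (Xrv m) (Zrv J m)
                   (\<lambda>\<omega>. (Zset J G \<omega>, Srv \<omega>)) + t * g"
proof -
  let ?\<Omega> = "outcomes M J \<X> \<S> \<V> \<Z>"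
  let ?T = "(\<lambda>\<omega>. (Xrv m \<omega>, Zrv J m \<omega>, Zset J G \<omega>, Srv \<omega>)) ` ?\<Omega>"
  let ?I = "\<lambda>r. cmi ?\<Omega> (weight M J p r) (Xrv m) (Zrv J m) (\<lambda>\<omega>. (Zset J G \<omega>, Srv \<omega>))"
  let ?term = "cmi_term ?\<Omega> (weight M J p q) (Xrv m) (Zrv J m) (\<lambda>\<omega>. (Zset J G \<omega>, Srv \<omega>))"
  obtain \<gamma> where \<gamma>: "\<And>t. ?I (tilt k c t q) = (\<Sum>u\<in>?T. (1 + t * \<gamma> u) * ?term u)"
    using cmi_tilt_rescaled[where q=q, OF k fin balanced] by blast
  have "?I (tilt k c t q) = ?I q + t * (\<Sum>u\<in>?T. \<gamma> u * ?term u)" for t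
    using \<gamma>[of t] \<gamma>[of 0] by (simp add: algebra_simps sum.distrib sum_distrib_left)
  then show ?thesis by blast
qed

lemma expect_tilt:
  assumes k: "k \<in> {J+1..M}"
  shows "expect \<Omega> (weight M J p (tilt k c t q)) f
     = expect \<Omega> (weight M J p q) f + t * expect \<Omega> (\<lambda>\<omega>. weight M J p q \<omega> * c (zval k \<omega>)) f"
  unfolding expect_def weight_tilt[OF k]
  by (simp add: algebra_simps sum.distrib sum_distrib_left)

lemma Min_image_midpoint_concave:
  fixes F0 F1 F2 :: "'a \<Rightarrow> real"
  assumes "finite (F0 ` A)" "finite (F1 ` A)" "finite (F2 ` A)" "A \<noteq> {}"
    and "\<forall>a\<in>A. F1 a + F2 a = 2 * F0 a"
  shows "Min (F1 ` A) + Min (F2 ` A) \<le> 2 * Min (F0 ` A)"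
proof -
  have "Min (F0 ` A) \<in> F0 ` A" using assms by (intro Min_in) auto
  then obtain a0 where a0: "a0 \<in> A" "Min (F0 ` A) = F0 a0" by auto
  have "Min (F1 ` A) \<le> F1 a0" "Min (F2 ` A) \<le> F2 a0" using assms a0 by auto
  then show ?thesis using assms(5) a0 by fastforce
qed

text \<open>Only finitely many expected distortions arise from reconstruction maps psi into a
  finite alphabet: psi matters only on the finitely many arguments g ` Omega.\<close>
lemma finite_expectations_of_maps:
  assumes "finite \<Omega>" "finite Vh"
  shows "finite ((\<lambda>\<psi>. expect \<Omega> w (\<lambda>\<omega>. h \<omega> (\<psi> (g \<omega>)))) ` {\<psi>. \<forall>a. \<psi> a \<in> Vh})"
proof (rule finite_subset)
  let ?E = "\<lambda>\<psi>. expect \<Omega> w (\<lambda>\<omega>. h \<omega> (\<psi> (g \<omega>)))"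
  show "?E ` {\<psi>. \<forall>a. \<psi> a \<in> Vh} \<subseteq> ?E ` PiE (g ` \<Omega>) (\<lambda>_. Vh)"
  proof
    fix u assume "u \<in> ?E ` {\<psi>. \<forall>a. \<psi> a \<in> Vh}"
    then obtain \<psi> where \<psi>: "\<forall>a. \<psi> a \<in> Vh" "u = ?E \<psi>" by auto
    have "u = ?E (restrict \<psi> (g ` \<Omega>))"
      unfolding \<psi>(2) expect_def by (rule sum.cong) auto
    moreover have "restrict \<psi> (g ` \<Omega>) \<in> PiE (g ` \<Omega>) (\<lambda>_. Vh)" using \<psi>(1) by auto
    ultimately show "u \<in> ?E ` PiE (g ` \<Omega>) (\<lambda>_. Vh)" by blast
  qed
  show "finite (?E ` PiE (g ` \<Omega>) (\<lambda>_. Vh))"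
    using assms by (intro finite_imageI finite_PiE) auto
qed

text \<open>Each distortion D^P_l is a minimum of expectations that are affine in t, hence
  midpoint-concave along the tilt.\<close>
lemma DP_tilt_concave:
  fixes \<X> :: "nat \<Rightarrow> 'x set" and \<S> :: "'s set" and Vh :: "nat \<Rightarrow> 'r set"
  assumes k: "k \<in> {J+1..M}" and fin: "finite (outcomes M J \<X> \<S> \<V> \<Z>)"
    and Vh: "\<forall>l\<in>{1..L}. finite (Vh l) \<and> Vh l \<noteq> {}"
  shows "DP M J L \<X> \<S> \<V> p Vh d \<Z> (tilt k c t q) l + DP M J L \<X> \<S> \<V> p Vh d \<Z> (tilt k c (-t) q) l
      \<le> 2 * DP M J L \<X> \<S> \<V> p Vh d \<Z> q l"
proof (cases "l \<in> {1..L}")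
  case False then show ?thesis unfolding DP_def by (simp only: if_False)
next
  case True
  define F where "F r \<psi> = expect (outcomes M J \<X> \<S> \<V> \<Z>) (weight M J p r)
                     (\<lambda>\<omega>. d l (Vrv \<omega>) (\<psi> (Zset J {1..M} \<omega>, Srv \<omega>)))" for r \<psi>
  let ?\<Psi> = "{\<psi> :: (nat \<Rightarrow> 'x + nat) \<times> 's \<Rightarrow> 'r. \<forall>a. \<psi> a \<in> Vh l}"
  have DP_eq: "DP M J L \<X> \<S> \<V> p Vh d \<Z> r l = Min (F r ` ?\<Psi>)" for r
    using True unfolding DP_def F_def by (simp add: setcompr_eq_image)
  have finite: "finite (F r ` ?\<Psi>)" for r
    unfolding F_def by (rule finite_expectations_of_maps) (use fin Vh True in auto)
  obtain r0 where "r0 \<in> Vh l" using Vh True by blast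
  then have nonempty: "?\<Psi> \<noteq> {}" by auto
  show ?thesis unfolding DP_eq
    by (rule Min_image_midpoint_concave[OF finite finite finite nonempty])
       (simp add: F_def expect_tilt[OF k])
qed

section \<open>Extreme points\<close>

lemma extreme_point_midpoint:
  fixes pt :: "'a::real_vector"
  assumes "pt extreme_point_of S" "a \<in> S" "b \<in> S" "pt = midpoint a b"
  shows "a = pt"
proof -
  have "a = b"
    using assms midpoint_in_open_segment[of a b] unfolding extreme_point_of_def by blast
  then show "a = pt" using assms(4) by simp
qed

lemma midpoint_pair:
  fixes a b :: "(nat \<Rightarrow> real) \<times> (nat \<Rightarrow> real)"
  shows "midpoint a b = (\<lambda>i. (fst a i + fst b i) / 2, \<lambda>l. (snd a l + snd b l) / 2)"
  by (cases a, cases b) (simp add: midpoint_def scaleR_fun_def fun_eq_iff)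

context
  fixes M J L :: nat and \<X> :: "nat \<Rightarrow> 'x set" and \<S> :: "'s set" and \<V> :: "'v set"
    and p :: "(nat \<Rightarrow> 'x) \<Rightarrow> 's \<Rightarrow> 'v \<Rightarrow> real"
    and Vh :: "nat \<Rightarrow> 'r set" and d :: "nat \<Rightarrow> 'v \<Rightarrow> 'r \<Rightarrow> real" and P :: "nat \<Rightarrow> nat"
  assumes finX: "\<forall>m\<in>{1..M}. finite (\<X> m)" and finS: "finite \<S>" and finV: "finite \<V>"
    and Vh: "\<forall>l\<in>{1..L}. finite (Vh l) \<and> Vh l \<noteq> {}"
begin

abbreviation corner where "corner \<Z> q \<equiv> (RP M J \<X> \<S> \<V> p P \<Z> q, DP M J L \<X> \<S> \<V> p Vh d \<Z> q)"
abbreviation reg where "reg \<equiv> region M J L \<X> \<S> \<V> p Vh d P"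

lemma finite_outcomes: "test_channels M J \<X> \<Z> q \<Longrightarrow> finite (outcomes M J \<X> \<S> \<V> \<Z>)"
  unfolding outcomes_def test_channels_def using finX finS finV
  by (intro finite_cartesian_product finite_PiE) auto

lemma dominating_in_hull:
  assumes "test_channels M J \<X> \<Z> q"
    and "\<forall>i. i \<notin> {1..M} \<longrightarrow> R i = 0" "\<forall>l. l \<notin> {1..L} \<longrightarrow> D l = 0"
    and "\<forall>i\<in>{1..M}. RP M J \<X> \<S> \<V> p P \<Z> q i \<le> R i"
    and "\<forall>l\<in>{1..L}. DP M J L \<X> \<S> \<V> p Vh d \<Z> q l \<le> D l"
  shows "(R, D) \<in> convex hull reg"
  by (rule hull_inc) (use assms in \<open>unfold region_def regionq_def, blast\<close>)

lemma corner_in_hull: "test_channels M J \<X> \<Z> q \<Longrightarrow> corner \<Z> q \<in> convex hull reg"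
  by (rule dominating_in_hull) (auto simp: RP_def DP_def)

text \<open>An extreme point dominating a corner point is that corner point: otherwise it is the
  midpoint of the corner and a point dominating it even more.\<close>
lemma extreme_point_is_corner:
  assumes tc: "test_channels M J \<X> \<Z> q" and ext: "pt extreme_point_of (convex hull reg)"
    and pt: "pt \<in> regionq M J L \<X> \<S> \<V> p Vh d P \<Z> q"
  shows "pt = corner \<Z> q"
proof -
  obtain R D where RD: "pt = (R, D)" by (cases pt) auto
  define b where "b = (\<lambda>i. 2 * R i - RP M J \<X> \<S> \<V> p P \<Z> q i, \<lambda>l. 2 * D l - DP M J L \<X> \<S> \<V> p Vh d \<Z> q l)"
  have b: "b \<in> convex hull reg"
    unfolding b_def using pt unfolding RD regionq_def
    by (intro dominating_in_hull[OF tc]) (auto simp: RP_def DP_def)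
  have "pt = midpoint (corner \<Z> q) b"
    unfolding midpoint_pair RD b_def by (simp add: fun_eq_iff)
  from extreme_point_midpoint[OF ext corner_in_hull[OF tc] b this] show ?thesis by simp
qed

lemma extreme_corner_midpoint:
  assumes tc1: "test_channels M J \<X> \<Z>1 q1" and tc2: "test_channels M J \<X> \<Z>2 q2"
    and ext: "pt extreme_point_of (convex hull reg)" and pt: "pt = corner \<Z>0 q0"
    and rates: "\<forall>i. RP M J \<X> \<S> \<V> p P \<Z>1 q1 i + RP M J \<X> \<S> \<V> p P \<Z>2 q2 i = 2 * RP M J \<X> \<S> \<V> p P \<Z>0 q0 i"
    and dists: "\<forall>l. DP M J L \<X> \<S> \<V> p Vh d \<Z>1 q1 l + DP M J L \<X> \<S> \<V> p Vh d \<Z>2 q2 l \<le> 2 * DP M J L \<X> \<S> \<V> p Vh d \<Z>0 q0 l"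
  shows "pt = corner \<Z>1 q1"
proof -
  define R1 where "R1 = RP M J \<X> \<S> \<V> p P \<Z>1 q1"
  define R2 where "R2 = RP M J \<X> \<S> \<V> p P \<Z>2 q2"
  define D1 where "D1 = DP M J L \<X> \<S> \<V> p Vh d \<Z>1 q1"
  define D2 where "D2 = DP M J L \<X> \<S> \<V> p Vh d \<Z>2 q2"
  define D0 where "D0 = DP M J L \<X> \<S> \<V> p Vh d \<Z>0 q0"
  define e where "e l = D0 l - (D1 l + D2 l) / 2" for l
  have e: "e l \<ge> 0" "l \<notin> {1..L} \<Longrightarrow> e l = 0" for l
    using dists[rule_format, of l] unfolding e_def D0_def D1_def D2_def by (auto simp: DP_def)
  text \<open>First pt is the midpoint of the two corners, each raised by the slack e ...\<close>
  have p1: "(R1, \<lambda>l. D1 l + e l) \<in> convex hull reg"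
    by (intro dominating_in_hull[OF tc1]) (auto simp: R1_def D1_def RP_def DP_def e)
  have p2: "(R2, \<lambda>l. D2 l + e l) \<in> convex hull reg"
    by (intro dominating_in_hull[OF tc2]) (auto simp: R2_def D2_def RP_def DP_def e)
  have "pt = midpoint (R1, \<lambda>l. D1 l + e l) (R2, \<lambda>l. D2 l + e l)"
    unfolding midpoint_pair pt using rates
    by (auto simp: fun_eq_iff e_def R1_def R2_def D0_def field_simps)
  from extreme_point_midpoint[OF ext p1 p2 this] have raised: "pt = (R1, \<lambda>l. D1 l + e l)" by simp
  text \<open>... and then it is the midpoint of the first corner and that corner raised by 2e.\<close>
  have p3: "(R1, \<lambda>l. D1 l + 2 * e l) \<in> convex hull reg"
    by (intro dominating_in_hull[OF tc1]) (auto simp: R1_def D1_def RP_def DP_def e)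
  have "pt = midpoint (corner \<Z>1 q1) (R1, \<lambda>l. D1 l + 2 * e l)"
    unfolding midpoint_pair raised by (simp add: fun_eq_iff R1_def D1_def)
  from extreme_point_midpoint[OF ext corner_in_hull[OF tc1] p3 this] show ?thesis by simp
qed

text \<open>The corner point is midpoint-affine in the rates and midpoint-concave in the
  distortions along a tilt orthogonal to the channel rows; so an extreme corner point is
  unchanged by every admissible tilt.\<close>
lemma extreme_corner_tilt:
  assumes tc: "test_channels M J \<X> \<Z> q" and ext: "pt extreme_point_of (convex hull reg)"
    and pt: "pt = corner \<Z> q" and k: "k \<in> {J+1..M}"
    and balanced: "\<forall>x\<in>\<X> k. (\<Sum>z\<in>\<Z> k. q k x z * c z) = 0"
    and admissible: "\<forall>z\<in>\<Z> k. \<bar>t * c z\<bar> \<le> 1"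
  shows "pt = corner \<Z> (tilt k c t q)"
proof (rule extreme_corner_midpoint[OF _ _ ext pt])
  have fin: "finite (outcomes M J \<X> \<S> \<V> \<Z>)" by (rule finite_outcomes[OF tc])
  show "test_channels M J \<X> \<Z> (tilt k c t q)" "test_channels M J \<X> \<Z> (tilt k c (-t) q)"
    using admissible by (auto intro!: test_channels_tilt[OF tc k balanced] simp: abs_le_iff)
  show "\<forall>i. RP M J \<X> \<S> \<V> p P \<Z> (tilt k c t q) i + RP M J \<X> \<S> \<V> p P \<Z> (tilt k c (-t) q) i
            = 2 * RP M J \<X> \<S> \<V> p P \<Z> q i"
  proof
    fix i
    show "RP M J \<X> \<S> \<V> p P \<Z> (tilt k c t q) i + RP M J \<X> \<S> \<V> p P \<Z> (tilt k c (-t) q) i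
            = 2 * RP M J \<X> \<S> \<V> p P \<Z> q i"
    proof (cases "i \<in> {1..M}")
      case True
      obtain g where "\<forall>t. cmi (outcomes M J \<X> \<S> \<V> \<Z>) (weight M J p (tilt k c t q)) (Xrv i) (Zrv J i)
              (\<lambda>\<omega>. (Zset J (P ` {1..<inv_into {1..M} P i}) \<omega>, Srv \<omega>))
          = cmi (outcomes M J \<X> \<S> \<V> \<Z>) (weight M J p q) (Xrv i) (Zrv J i)
              (\<lambda>\<omega>. (Zset J (P ` {1..<inv_into {1..M} P i}) \<omega>, Srv \<omega>)) + t * g"
        using cmi_tilt_affine[where q=q, OF k fin balanced] by blast
      then show ?thesis using True by (simp add: RP_def Let_def)
    next
      case False
      then show ?thesis unfolding RP_def by (simp only: if_False)
    qed
  qed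
  show "\<forall>l. DP M J L \<X> \<S> \<V> p Vh d \<Z> (tilt k c t q) l + DP M J L \<X> \<S> \<V> p Vh d \<Z> (tilt k c (-t) q) l
            \<le> 2 * DP M J L \<X> \<S> \<V> p Vh d \<Z> q l"
    using DP_tilt_concave[OF k fin Vh] by blast
qed

lemma delete_unused_letter:
  assumes tc: "test_channels M J \<X> \<Z> q" and k: "k \<in> {J+1..M}" and z1: "z1 \<in> \<Z> k"
    and unused: "\<forall>x. q k x z1 = 0"
  fixes \<Z>' defines "\<Z>' \<equiv> \<Z>(k := \<Z> k - {z1})"
  shows "test_channels M J \<X> \<Z>' q" "corner \<Z>' q = corner \<Z> q"
proof -
  show "test_channels M J \<X> \<Z>' q"
    unfolding test_channels_def
  proof (intro ballI conjI)
    fix j assume "j \<in> {J+1..M}"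
    then show "finite (\<Z>' j)" using tc unfolding test_channels_def \<Z>'_def by auto
  next
    fix j x z assume "j \<in> {J+1..M}" "x \<in> \<X> j" "z \<in> \<Z>' j"
    then show "0 \<le> q j x z" using tc unfolding test_channels_def \<Z>'_def by (auto split: if_splits)
  next
    fix j x assume j: "j \<in> {J+1..M}" and x: "x \<in> \<X> j"
    have "(\<Sum>z\<in>\<Z> j. q j x z) = (\<Sum>z\<in>\<Z>' j. q j x z)" if "j = k"
      using tc j z1 unused that unfolding test_channels_def \<Z>'_def by (simp add: sum.remove)
    then show "(\<Sum>z\<in>\<Z>' j. q j x z) = 1"
      using tc j x unfolding test_channels_def \<Z>'_def by (cases "j = k") auto
  qed
  have sub: "outcomes M J \<X> \<S> \<V> \<Z>' \<subseteq> outcomes M J \<X> \<S> \<V> \<Z>"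
  proof -
    have "PiE {J+1..M} \<Z>' \<subseteq> PiE {J+1..M} \<Z>" by (rule PiE_mono) (auto simp: \<Z>'_def)
    then show ?thesis unfolding outcomes_def by auto
  qed
  text \<open>The deleted outcomes are exactly those with Z_k = z1, which have weight zero.\<close>
  have null: "\<forall>\<omega>\<in>outcomes M J \<X> \<S> \<V> \<Z> - outcomes M J \<X> \<S> \<V> \<Z>'. weight M J p q \<omega> = 0"
  proof
    fix \<omega> assume \<omega>: "\<omega> \<in> outcomes M J \<X> \<S> \<V> \<Z> - outcomes M J \<X> \<S> \<V> \<Z>'"
    obtain x s v z where \<omega>_eq: "\<omega> = (x, s, v, z)" by (cases \<omega>) auto
    have "z k = z1"
      using \<omega> unfolding \<omega>_eq outcomes_def \<Z>'_def by (auto simp: PiE_iff split: if_splits)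
    then have "(\<Prod>j\<in>{J+1..M}. q j (x j) (z j)) = 0" using k unused by (intro prod_zero) auto
    then show "weight M J p q \<omega> = 0" unfolding \<omega>_eq weight_def by simp
  qed
  have fin: "finite (outcomes M J \<X> \<S> \<V> \<Z>)" by (rule finite_outcomes[OF tc])
  show "corner \<Z>' q = corner \<Z> q"
    unfolding RP_def DP_def
    by (simp only: cmi_restrict_support[OF sub fin null] expect_restrict_support[OF sub fin null])
qed

lemma extreme_corner_shrink:
  assumes tc: "test_channels M J \<X> \<Z> q" and ext: "pt extreme_point_of (convex hull reg)"
    and pt: "pt = corner \<Z> q" and k: "k \<in> {J+1..M}" and large: "card (\<Z> k) > card (\<X> k)"
  shows "\<exists>\<Z>' q'. test_channels M J \<X> \<Z>' q' \<and> pt = corner \<Z>' q' \<and>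
           (\<forall>j. j \<noteq> k \<longrightarrow> \<Z>' j = \<Z> j) \<and> card (\<Z>' k) < card (\<Z> k)"
proof -
  have finZ: "finite (\<Z> k)" using tc k unfolding test_channels_def by auto
  obtain c where c: "\<exists>z\<in>\<Z> k. c z \<noteq> 0" "\<forall>x\<in>\<X> k. (\<Sum>z\<in>\<Z> k. c z * q k x z) = 0"
    using nontrivial_kernel_vector[of "\<X> k" "\<Z> k" "q k"] finX k finZ large by auto
  have balanced: "\<forall>x\<in>\<X> k. (\<Sum>z\<in>\<Z> k. q k x z * c z) = 0" using c(2) by (simp add: mult.commute)
  text \<open>Tilt as far as possible: t = -1 / c(z1) for a letter z1 maximizing |c|.\<close>
  obtain z1 where "is_arg_min (\<lambda>z. - \<bar>c z\<bar>) (\<lambda>z. z \<in> \<Z> k) z1"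
    using ex_is_arg_min_if_finite[OF finZ] c(1) by blast
  then have z1: "z1 \<in> \<Z> k" "\<forall>z\<in>\<Z> k. \<bar>c z\<bar> \<le> \<bar>c z1\<bar>"
    unfolding is_arg_min_def by force+
  have cz1: "c z1 \<noteq> 0" using c(1) z1(2) by force
  define t where "t = - 1 / c z1"
  have admissible: "\<forall>z\<in>\<Z> k. \<bar>t * c z\<bar> \<le> 1"
  proof
    fix z assume "z \<in> \<Z> k"
    then have "\<bar>c z\<bar> \<le> \<bar>c z1\<bar>" using z1(2) by blast
    then show "\<bar>t * c z\<bar> \<le> 1" using cz1 by (simp add: t_def abs_mult divide_le_eq_1)
  qed
  define q' where "q' = tilt k c t q"
  have tc': "test_channels M J \<X> \<Z> q'"
    unfolding q'_def using admissible
    by (intro test_channels_tilt[OF tc k balanced]) (auto simp: abs_le_iff)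
  have unused: "\<forall>x. q' k x z1 = 0" using cz1 by (simp add: q'_def tilt_def t_def)
  have "pt = corner \<Z> q'"
    unfolding q'_def by (rule extreme_corner_tilt[OF tc ext pt k balanced admissible])
  moreover have "card (\<Z> k - {z1}) < card (\<Z> k)" by (rule card_Diff1_less[OF finZ z1(1)])
  ultimately show ?thesis
    using delete_unused_letter[OF tc' k z1(1) unused]
    by (intro exI[of _ "\<Z>(k := \<Z> k - {z1})"] exI[of _ q']) auto
qed

lemma extreme_corner_small_alphabets:
  assumes ext: "pt extreme_point_of (convex hull reg)"
    and tc: "test_channels M J \<X> \<Z> q" and pt: "pt = corner \<Z> q"
  shows "\<exists>\<Z>' q'. test_channels M J \<X> \<Z>' q' \<and> (\<forall>k\<in>{J+1..M}. card (\<Z>' k) \<le> card (\<X> k)) \<and>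
           pt = corner \<Z>' q'"
  using tc pt
proof (induction "\<Sum>k\<in>{J+1..M}. card (\<Z> k)" arbitrary: \<Z> q rule: less_induct)
  case less
  show ?case
  proof (cases "\<forall>k\<in>{J+1..M}. card (\<Z> k) \<le> card (\<X> k)")
    case True
    then show ?thesis using less.prems by blast
  next
    case False
    then obtain k where k: "k \<in> {J+1..M}" "card (\<Z> k) > card (\<X> k)" by (auto simp: not_le)
    obtain \<Z>' q' where shrunk: "test_channels M J \<X> \<Z>' q'" "pt = corner \<Z>' q'"
        "\<forall>j. j \<noteq> k \<longrightarrow> \<Z>' j = \<Z> j" "card (\<Z>' k) < card (\<Z> k)"
      using extreme_corner_shrink[OF less.prems(1) ext less.prems(2) k] by blast
    have "(\<Sum>j\<in>{J+1..M}. card (\<Z>' j)) < (\<Sum>j\<in>{J+1..M}. card (\<Z> j))"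
      by (rule sum_strict_mono_ex1) (use shrunk(3,4) k(1) in \<open>auto simp: le_less\<close>)
    then show ?thesis using less.hyps shrunk(1,2) by blast
  qed
qed

end

theorem lemma5:
  fixes M J L :: nat
    and \<X> :: "nat \<Rightarrow> 'x set" and \<S> :: "'s set" and \<V> :: "'v set"
    and p :: "(nat \<Rightarrow> 'x) \<Rightarrow> 's \<Rightarrow> 'v \<Rightarrow> real"
    and Vh :: "nat \<Rightarrow> 'r set" and d :: "nat \<Rightarrow> 'v \<Rightarrow> 'r \<Rightarrow> real" and dmax :: "nat \<Rightarrow> real"
    and P :: "nat \<Rightarrow> nat"
    and pt :: "(nat \<Rightarrow> real) \<times> (nat \<Rightarrow> real)"
  assumes "M \<ge> 1" and "J \<le> M" and "L \<ge> 1"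
    and "\<forall>m\<in>{1..M}. finite (\<X> m)" and "finite \<S>" and "finite \<V>"
    and "\<forall>x\<in>PiE {1..M} \<X>. \<forall>s\<in>\<S>. \<forall>v\<in>\<V>. 0 \<le> p x s v"
    and "(\<Sum>x\<in>PiE {1..M} \<X>. \<Sum>s\<in>\<S>. \<Sum>v\<in>\<V>. p x s v) = 1"
    and "\<forall>l\<in>{1..L}. finite (Vh l) \<and> Vh l \<noteq> {}"
    and "\<forall>l\<in>{1..L}. \<forall>v\<in>\<V>. \<forall>r\<in>Vh l. 0 \<le> d l v r \<and> d l v r \<le> dmax l"
    and "P permutes {1..M}"
    and "pt \<in> region M J L \<X> \<S> \<V> p Vh d P"
    and "pt extreme_point_of (convex hull (region M J L \<X> \<S> \<V> p Vh d P))"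
  shows "\<exists>\<Z> q. test_channels M J \<X> \<Z> q \<and> (\<forall>k\<in>{J+1..M}. card (\<Z> k) \<le> card (\<X> k)) \<and>
           pt = (RP M J \<X> \<S> \<V> p P \<Z> q, DP M J L \<X> \<S> \<V> p Vh d \<Z> q)"
proof -
  from assms(12) obtain \<Z> q where tc: "test_channels M J \<X> \<Z> q"
      and dominates: "pt \<in> regionq M J L \<X> \<S> \<V> p Vh d P \<Z> q"
    unfolding region_def by blast
  have "pt = (RP M J \<X> \<S> \<V> p P \<Z> q, DP M J L \<X> \<S> \<V> p Vh d \<Z> q)"
    by (rule extreme_point_is_corner[OF assms(4,5,6,9) tc assms(13) dominates])
  then show ?thesis
    by (rule extreme_corner_small_alphabets[OF assms(4,5,6,9) assms(13) tc])
qed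

end
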